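(* Let $R\subseteq\mathbb N$ be infinite. Then $R$ is sparse if and only if $R$ is regular.
   Context: Enumerate $R$ increasingly as $(r_n)_{n\in\mathbb N}$; $\sigma:R\to R$ is the successor map $\sigma(r_n)=r_{n+1}$, $\sigma^k$ its $k$-fold iterate ($\sigma^0=\mathrm{id}$). An operator on $R$ is a function $R\to\mathbb Z$, $z\mapsto a_m\sigma^m(z)+\dots+a_0\sigma^0(z)$ with $a_i\in\mathbb Z$. For an operator $A$: $A=_R0$ if $Az=0$ for all $z\in R$; $A>_R0$ (resp. $A<_R0$) if $Az>0$ (resp. $Az<0$) for all but finitely many $z\in R$. $R$ is sparse if every operator $A$ satisfies (S1) $A=_R0$ or $A>_R0$ or $A<_R0$; and (S2) if $A>_R0$ then there is $\Delta\in\mathbb N$ with $A(\sigma^\Delta z)>z$ for all $z\in R$. $R$ is regular if $r_{n+1}/r_n\to\theta$ for some $\theta\in\mathbb R_{>1}\cup\{\infty\}$ and, whenever $\theta$ is algebraic over $\mathbb Q$ with minimal polynomial $f(x)=\sum_{i=0}^ka_ix^i$, we have $\sum_{i=0}^ka_ir_{n+i}=0$ for all $n\in\mathbb N$. *)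

theory Defs
  imports "HOL-Analysis.Analysis" "HOL-Library.Infinite_Set" "HOL-Computational_Algebra.Polynomial"
begin

definition rseq :: "nat set \<Rightarrow> nat \<Rightarrow> nat" where
  "rseq R n = enumerate R n"

text \<open>Successor map sigma(r_n) = r_(n+1).\<close>
definition succR :: "nat set \<Rightarrow> nat \<Rightarrow> nat" where
  "succR R z = enumerate R (Suc (inv_into UNIV (enumerate R) z))"

text \<open>An operator is given by a degree m and integer coefficients a_0..a_m:
  z \<mapsto> sum_{i=0}^m a_i sigma^i(z).\<close>
definition op_apply :: "nat set \<Rightarrow> nat \<Rightarrow> (nat \<Rightarrow> int) \<Rightarrow> nat \<Rightarrow> int" where
  "op_apply R m a z = (\<Sum>i\<le>m. a i * int ((succR R ^^ i) z))"

definition op_eq0 :: "nat set \<Rightarrow> nat \<Rightarrow> (nat \<Rightarrow> int) \<Rightarrow> bool" where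
  "op_eq0 R m a \<longleftrightarrow> (\<forall>z\<in>R. op_apply R m a z = 0)"

definition op_pos :: "nat set \<Rightarrow> nat \<Rightarrow> (nat \<Rightarrow> int) \<Rightarrow> bool" where
  "op_pos R m a \<longleftrightarrow> finite {z\<in>R. \<not> op_apply R m a z > 0}"

definition op_neg :: "nat set \<Rightarrow> nat \<Rightarrow> (nat \<Rightarrow> int) \<Rightarrow> bool" where
  "op_neg R m a \<longleftrightarrow> finite {z\<in>R. \<not> op_apply R m a z < 0}"

definition sparse :: "nat set \<Rightarrow> bool" where
  "sparse R \<longleftrightarrow>
     (\<forall>m a. (op_eq0 R m a \<or> op_pos R m a \<or> op_neg R m a) \<and>
            (op_pos R m a \<longrightarrow>
               (\<exists>\<Delta>::nat. \<forall>z\<in>R. op_apply R m a ((succR R ^^ \<Delta>) z) > int z)))"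

definition is_min_poly :: "real \<Rightarrow> rat poly \<Rightarrow> bool" where
  "is_min_poly \<theta> f \<longleftrightarrow> f \<noteq> 0 \<and> lead_coeff f = 1 \<and> poly (map_poly of_rat f) \<theta> = 0 \<and>
     (\<forall>g::rat poly. g \<noteq> 0 \<and> poly (map_poly of_rat g) \<theta> = 0 \<longrightarrow> degree f \<le> degree g)"

definition regular :: "nat set \<Rightarrow> bool" where
  "regular R \<longleftrightarrow>
     (\<exists>\<theta>::real. \<theta> > 1 \<and>
        (\<lambda>n. real (rseq R (Suc n)) / real (rseq R n)) \<longlonglongrightarrow> \<theta> \<and>
        (algebraic \<theta> \<longrightarrow> (\<forall>f. is_min_poly \<theta> f \<longrightarrow>
            (\<forall>n. (\<Sum>i\<le>degree f. coeff f i * of_nat (rseq R (n + i))) = 0))))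
     \<or> filterlim (\<lambda>n. real (rseq R (Suc n)) / real (rseq R n)) at_top sequentially"

end

theory Submission
  imports Defs
begin

text \<open>
  Let \<open>r n\<close> enumerate \<open>R\<close>. If \<open>r (n + 1) / r n \<rightarrow> \<theta>\<close> is finite, an operator \<open>L\<close> with
  coefficient polynomial \<open>P\<close> satisfies \<open>L (r n) / r n \<rightarrow> P \<theta>\<close>; if \<open>\<theta> = \<infinity>\<close>, \<open>L\<close> is
  dominated by its top term. So for regular \<open>R\<close> every operator is either identically zero
  (when \<open>P \<theta> = 0\<close>, since then the minimal polynomial divides \<open>P\<close> and its recurrence
  propagates), eventually negative, or eventually at least \<open>c z\<close>; in the last case the
  geometric growth of \<open>r\<close> yields (S2).

  Conversely, (S1) for \<open>b \<sigma> - a\<close> puts every rational \<open>a / b\<close> eventually on one side of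
  the ratios \<open>r (n + 1) / r n\<close>, which forces them to converge in \<open>[1, \<infinity>]\<close>. For finite
  \<open>\<theta>\<close>, (S2) rules out eventually positive operators with \<open>L z = o(z)\<close>, so all of those
  vanish identically: applied to \<open>\<sigma> - id\<close> this shows \<open>\<theta> > 1\<close>, and applied to an integer
  multiple of the minimal polynomial of \<open>\<theta>\<close> it gives the recurrence.
\<close>

definition seq_op :: "(nat \<Rightarrow> nat) \<Rightarrow> nat \<Rightarrow> (nat \<Rightarrow> int) \<Rightarrow> nat \<Rightarrow> int" where
  "seq_op r m a n = (\<Sum>i\<le>m. a i * int (r (n + i)))"

definition sparse_seq :: "(nat \<Rightarrow> nat) \<Rightarrow> bool" where
  "sparse_seq r \<longleftrightarrow> (\<forall>m a.
     ((\<forall>n. seq_op r m a n = 0) \<or> (\<forall>\<^sub>F n in sequentially. seq_op r m a n > 0) \<or>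
        (\<forall>\<^sub>F n in sequentially. seq_op r m a n < 0)) \<and>
     ((\<forall>\<^sub>F n in sequentially. seq_op r m a n > 0) \<longrightarrow>
        (\<exists>\<Delta>. \<forall>n. seq_op r m a (n + \<Delta>) > int (r n))))"

definition poly_seq_op :: "rat poly \<Rightarrow> (nat \<Rightarrow> nat) \<Rightarrow> nat \<Rightarrow> rat" where
  "poly_seq_op g r n = (\<Sum>i\<le>degree g. coeff g i * of_nat (r (n + i)))"

definition regular_seq :: "(nat \<Rightarrow> nat) \<Rightarrow> bool" where
  "regular_seq r \<longleftrightarrow>
     (\<exists>\<theta>::real. \<theta> > 1 \<and> (\<lambda>n. real (r (Suc n)) / real (r n)) \<longlonglongrightarrow> \<theta> \<and>
        (algebraic \<theta> \<longrightarrow> (\<forall>f. is_min_poly \<theta> f \<longrightarrow> (\<forall>n. poly_seq_op f r n = 0))))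
     \<or> filterlim (\<lambda>n. real (r (Suc n)) / real (r n)) at_top sequentially"

lemma regular_iff_regular_seq: "regular R \<longleftrightarrow> regular_seq (enumerate R)"
  unfolding regular_def regular_seq_def poly_seq_op_def rseq_def ..

lemma funpow_succR_enumerate:
  assumes "infinite R"
  shows "(succR R ^^ i) (enumerate R n) = enumerate R (n + i)"
  by (induction i) (simp_all add: succR_def inv_into_f_f[OF inj_enumerate[OF assms]])

lemma op_apply_enumerate:
  assumes "infinite R"
  shows "op_apply R m a (enumerate R n) = seq_op (enumerate R) m a n"
  by (simp add: op_apply_def seq_op_def funpow_succR_enumerate[OF assms])

lemma Ball_enumerate_iff:
  fixes R :: "nat set"
  assumes "infinite R"
  shows "(\<forall>z\<in>R. P z) \<longleftrightarrow> (\<forall>n. P (enumerate R n))"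
  by (metis range_enumerate[OF assms] rangeE rangeI)

lemma finite_Collect_not_enumerate_iff:
  fixes R :: "nat set"
  assumes "infinite R"
  shows "finite {z\<in>R. \<not> P z} \<longleftrightarrow> (\<forall>\<^sub>F n in sequentially. P (enumerate R n))"
proof -
  have "{z\<in>R. \<not> P z} = enumerate R ` {n. \<not> P (enumerate R n)}"
    using range_enumerate[OF assms] by auto
  then show ?thesis
    using inj_enumerate[OF assms]
    by (simp add: finite_image_iff inj_on_subset eventually_cofinite cofinite_eq_sequentially[symmetric])
qed

lemma sparse_iff_sparse_seq:
  assumes "infinite R"
  shows "sparse R \<longleftrightarrow> sparse_seq (enumerate R)"
  unfolding sparse_def sparse_seq_def op_eq0_def op_pos_def op_neg_def
    finite_Collect_not_enumerate_iff[OF assms] Ball_enumerate_iff[OF assms]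
    funpow_succR_enumerate[OF assms] op_apply_enumerate[OF assms] ..

lemma map_poly_of_rat_add:
  "map_poly (of_rat :: rat \<Rightarrow> 'a :: field_char_0) (p + q) = map_poly of_rat p + map_poly of_rat q"
  by (rule poly_eqI) (simp add: coeff_map_poly of_rat_add)

lemma map_poly_of_rat_mult:
  "map_poly (of_rat :: rat \<Rightarrow> 'a :: field_char_0) (p * q) = map_poly of_rat p * map_poly of_rat q"
  by (rule poly_eqI) (simp add: coeff_map_poly coeff_mult of_rat_sum of_rat_mult)

lemma poly_map_poly_of_rat_eq_sum:
  assumes "degree p \<le> m"
  shows "poly (map_poly (of_rat :: rat \<Rightarrow> 'a :: field_char_0) p) x = (\<Sum>i\<le>m. of_rat (coeff p i) * x ^ i)"
proof -
  have "poly (map_poly (of_rat :: rat \<Rightarrow> 'a) p) x = (\<Sum>i\<le>degree p. of_rat (coeff p i) * x ^ i)"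
    by (simp add: poly_altdef coeff_map_poly degree_map_poly)
  also have "\<dots> = (\<Sum>i\<le>m. of_rat (coeff p i) * x ^ i)"
    by (rule sum.mono_neutral_left) (use assms le_degree in auto)
  finally show ?thesis .
qed

lemma is_min_poly_exists:
  assumes "p \<noteq> 0" "poly (map_poly of_rat p) \<theta> = 0"
  shows "\<exists>f. is_min_poly \<theta> f"
proof -
  let ?root = "\<lambda>g::rat poly. g \<noteq> 0 \<and> poly (map_poly of_rat g) \<theta> = 0"
  obtain g where g: "?root g" and least: "\<And>h. ?root h \<Longrightarrow> degree g \<le> degree h"
    using ex_has_least_nat[of ?root p degree] assms by blast
  define f where "f = smult (inverse (lead_coeff g)) g"
  have "lead_coeff g \<noteq> 0" using g by simp
  then have "f \<noteq> 0" "lead_coeff f = 1" "degree f = degree g"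
    "poly (map_poly of_rat f) \<theta> = 0"
    using g by (simp_all add: f_def map_poly_smult of_rat_mult)
  then have "is_min_poly \<theta> f" using least by (simp add: is_min_poly_def)
  then show ?thesis ..
qed

lemma is_min_poly_dvd:
  assumes f: "is_min_poly \<theta> f" and p: "poly (map_poly of_rat p) \<theta> = 0"
  shows "f dvd p"
proof -
  have "poly (map_poly of_rat f) \<theta> = 0" using f by (simp add: is_min_poly_def)
  moreover have "p = f * (p div f) + p mod f" by simp
  ultimately have "poly (map_poly of_rat (p mod f)) \<theta> = 0"
    using p by (metis map_poly_of_rat_add map_poly_of_rat_mult poly_add poly_mult mult_zero_left add_0)
  moreover have "degree (p mod f) < degree f" if "p mod f \<noteq> 0"
    using f that degree_mod_less' by (auto simp: is_min_poly_def)
  ultimately have "p mod f = 0" using f unfolding is_min_poly_def by (meson not_less)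
  then show ?thesis by (simp add: mod_eq_0_iff_dvd)
qed

lemma poly_seq_op_eq_sum:
  assumes "degree g \<le> m"
  shows "poly_seq_op g r n = (\<Sum>i\<le>m. coeff g i * of_nat (r (n + i)))"
  unfolding poly_seq_op_def
  by (rule sum.mono_neutral_left) (use assms le_degree in auto)

lemma poly_seq_op_0 [simp]: "poly_seq_op 0 r n = 0"
  by (simp add: poly_seq_op_def)

lemma poly_seq_op_add: "poly_seq_op (g + h) r n = poly_seq_op g r n + poly_seq_op h r n"
  using degree_add_le[of g "max (degree g) (degree h)" h]
  by (simp add: poly_seq_op_eq_sum[of _ "max (degree g) (degree h)"] distrib_right sum.distrib)

lemma poly_seq_op_smult: "poly_seq_op (smult c g) r n = c * poly_seq_op g r n"
  using degree_smult_le[of c g]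
  by (simp add: poly_seq_op_eq_sum[of _ "degree g"] sum_distrib_left mult.assoc)

lemma poly_seq_op_pCons_0: "poly_seq_op (pCons 0 g) r n = poly_seq_op g r (Suc n)"
proof -
  have "poly_seq_op (pCons 0 g) r n = (\<Sum>i\<le>Suc (degree g). coeff (pCons 0 g) i * of_nat (r (n + i)))"
    by (rule poly_seq_op_eq_sum) (simp add: degree_pCons_le)
  also have "\<dots> = poly_seq_op g r (Suc n)"
    by (subst sum.atMost_Suc_shift) (simp add: poly_seq_op_def)
  finally show ?thesis .
qed

lemma poly_seq_op_mult_eq_0:
  assumes "\<And>n. poly_seq_op f r n = 0"
  shows "poly_seq_op (q * f) r n = 0"
  by (induction q arbitrary: n rule: pCons_induct)
    (simp_all add: mult_pCons_left poly_seq_op_add poly_seq_op_smult poly_seq_op_pCons_0 assms)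

text \<open>The coefficient polynomial is a multiple of the minimal polynomial, so the operator
  inherits its recurrence.\<close>
lemma seq_op_eq_0_if_root:
  assumes rec: "algebraic \<theta> \<longrightarrow> (\<forall>f. is_min_poly \<theta> f \<longrightarrow> (\<forall>n. poly_seq_op f r n = 0))"
    and root: "(\<Sum>i\<le>m. of_int (a i) * \<theta> ^ i) = 0"
  shows "seq_op r m a n = 0"
proof -
  define p :: "rat poly" where "p = (\<Sum>i\<le>m. monom (of_int (a i)) i)"
  have coeff_p: "coeff p i = (if i \<le> m then of_int (a i) else 0)" for i
    by (simp add: p_def coeff_sum)
  have deg_p: "degree p \<le> m" by (rule degree_le) (simp add: coeff_p)
  have seq_op_p: "of_int (seq_op r m a n) = poly_seq_op p r n"
    by (simp add: poly_seq_op_eq_sum[OF deg_p] coeff_p seq_op_def)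
  show ?thesis
  proof (cases "p = 0")
    case True
    then show ?thesis using seq_op_p by simp
  next
    case False
    have p_root: "poly (map_poly of_rat p) \<theta> = 0"
      using root by (simp add: poly_map_poly_of_rat_eq_sum[OF deg_p] coeff_p)
    then have "algebraic \<theta>"
      using False by (intro algebraicI'[of "map_poly of_rat p"]) (simp_all add: coeff_map_poly map_poly_eq_0_iff)
    obtain f where f: "is_min_poly \<theta> f" using is_min_poly_exists[OF False p_root] ..
    then obtain q where "p = q * f" using is_min_poly_dvd[OF f p_root] by (metis dvdE mult.commute)
    then have "poly_seq_op p r n = 0"
      using poly_seq_op_mult_eq_0 rec f \<open>algebraic \<theta>\<close> by blast
    then show ?thesis using seq_op_p by simp
  qed
qed

lemma rat_poly_integer_multiple:
  fixes f :: "rat poly"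
  obtains d :: int and a where "d > 0" "\<And>i. of_int (a i) = of_int d * coeff f i"
proof -
  have "\<exists>d a. d > 0 \<and> (\<forall>i. of_int (a i) = of_int d * coeff f i)"
  proof (induction f rule: pCons_induct)
    case 0
    show ?case by (intro exI[of _ 1] exI[of _ "\<lambda>_. 0"]) simp
  next
    case (pCons c g)
    then obtain d a where d: "d > 0" and a: "\<And>i. of_int (a i) = of_int d * coeff g i" by blast
    obtain x y where xy: "quotient_of c = (x, y)" by force
    have y: "y > 0" and c: "c = of_int x / of_int y"
      using quotient_of_denom_pos[OF xy] quotient_of_div[OF xy] by auto
    define a' where "a' = (\<lambda>i. case i of 0 \<Rightarrow> d * x | Suc j \<Rightarrow> y * a j)"
    have "of_int (a' i) = of_int (d * y) * coeff (pCons c g) i" for i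
      using y by (cases i) (simp_all add: a'_def a c)
    then show ?case using d y by (intro exI[of _ "d * y"] exI[of _ a']) simp
  qed
  then show ?thesis using that by blast
qed

text \<open>The limit is the supremum of the rationals eventually below \<open>X\<close>.\<close>
lemma tendsto_or_filterlim_at_top_if_rational_sides:
  fixes X :: "'a \<Rightarrow> real"
  assumes "F \<noteq> bot" and below: "\<forall>\<^sub>F x in F. c \<le> X x"
    and sides: "\<And>q. q \<in> \<rat> \<Longrightarrow> (\<forall>\<^sub>F x in F. q \<le> X x) \<or> (\<forall>\<^sub>F x in F. X x \<le> q)"
  shows "filterlim X at_top F \<or> (\<exists>L. (X \<longlongrightarrow> L) F)"
proof -
  define S where "S = {q \<in> \<rat>. \<forall>\<^sub>F x in F. q \<le> X x}"
  show ?thesis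
  proof (cases "\<rat> \<subseteq> S")
    case True
    have "filterlim X at_top F"
      unfolding filterlim_at_top
    proof
      fix Z :: real
      have "of_int \<lceil>Z\<rceil> \<in> S" using True by auto
      then show "\<forall>\<^sub>F x in F. Z \<le> X x"
        unfolding S_def by (auto elim!: eventually_mono intro: order_trans[OF le_of_int_ceiling])
    qed
    then show ?thesis ..
  next
    case False
    then obtain q0 where "q0 \<in> \<rat>" "q0 \<notin> S" by blast
    then have below_q0: "\<forall>\<^sub>F x in F. X x \<le> q0" using sides unfolding S_def by blast
    have bdd: "bdd_above S"
    proof (rule bdd_aboveI)
      fix s assume "s \<in> S"
      then have "\<forall>\<^sub>F x in F. s \<le> q0"
        using below_q0 unfolding S_def by (auto elim: eventually_elim2)
      then show "s \<le> q0" using eventually_const[OF \<open>F \<noteq> bot\<close>] by blast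
    qed
    have "of_int \<lfloor>c\<rfloor> \<in> S"
      using below unfolding S_def by (auto elim!: eventually_mono intro: order_trans[OF of_int_floor_le])
    then have ne: "S \<noteq> {}" by blast
    have "(X \<longlongrightarrow> Sup S) F"
    proof (rule order_tendstoI)
      fix y assume "y < Sup S"
      then obtain q where "q \<in> \<rat>" "y < q" "q < Sup S" using Rats_dense_in_real by blast
      then obtain s where "s \<in> S" "q < s" using less_cSup_iff[OF ne bdd] by blast
      then show "\<forall>\<^sub>F x in F. y < X x"
        using \<open>y < q\<close> unfolding S_def by (auto elim!: eventually_mono)
    next
      fix y assume "Sup S < y"
      then obtain q where q: "q \<in> \<rat>" "Sup S < q" "q < y" using Rats_dense_in_real by blast
      then have "q \<notin> S" using cSup_upper[OF _ bdd] by force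
      then have "\<forall>\<^sub>F x in F. X x \<le> q" using sides q(1) unfolding S_def by blast
      then show "\<forall>\<^sub>F x in F. X x < y" using q(3) by (auto elim!: eventually_mono)
    qed
    then show ?thesis by blast
  qed
qed

locale increasing_seq =
  fixes r :: "nat \<Rightarrow> nat"
  assumes strict_mono: "strict_mono r"
begin

definition ratio :: "nat \<Rightarrow> real" where
  "ratio n = real (r (Suc n)) / real (r n)"

lemma ratio_eq: "(\<lambda>n. real (r (Suc n)) / real (r n)) = ratio"
  by (simp add: fun_eq_iff ratio_def)

lemma r_pos: "0 < n \<Longrightarrow> 0 < r n"
  using strict_monoD[OF strict_mono, of 0 n] by simp

lemma eventually_r_pos: "\<forall>\<^sub>F n in sequentially. 0 < r n"
  using eventually_gt_at_top[of 0] by (rule eventually_mono) (rule r_pos)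

lemma r_mono: "i \<le> j \<Longrightarrow> r i \<le> r j"
  using strict_mono by (simp add: strict_mono_less_eq)

lemma eventually_one_le_ratio: "\<forall>\<^sub>F n in sequentially. 1 \<le> ratio n"
  using eventually_r_pos by (rule eventually_mono) (simp add: ratio_def r_mono)

lemma LIMSEQ_shift_div:
  assumes "ratio \<longlonglongrightarrow> \<theta>"
  shows "(\<lambda>n. real (r (n + i)) / real (r n)) \<longlonglongrightarrow> \<theta> ^ i"
proof (induction i)
  case 0
  have "\<forall>\<^sub>F n in sequentially. real (r (n + 0)) / real (r n) = 1"
    using eventually_r_pos by (rule eventually_mono) simp
  then show ?case by (simp add: tendsto_eventually)
next
  case (Suc i)
  have "(\<lambda>n. ratio (n + i) * (real (r (n + i)) / real (r n))) \<longlonglongrightarrow> \<theta> * \<theta> ^ i"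
    using LIMSEQ_ignore_initial_segment[OF assms] Suc by (rule tendsto_mult)
  moreover have "\<forall>\<^sub>F n in sequentially.
      ratio (n + i) * (real (r (n + i)) / real (r n)) = real (r (n + Suc i)) / real (r n)"
    using eventually_gt_at_top[of 0] by (rule eventually_mono) (simp add: ratio_def r_pos)
  ultimately show ?case by (simp add: Lim_transform_eventually)
qed

lemma LIMSEQ_seq_op_div:
  assumes "ratio \<longlonglongrightarrow> \<theta>"
  shows "(\<lambda>n. of_int (seq_op r m a n) / real (r n)) \<longlonglongrightarrow> (\<Sum>i\<le>m. of_int (a i) * \<theta> ^ i)"
proof -
  have "of_int (seq_op r m a n) / real (r n) = (\<Sum>i\<le>m. of_int (a i) * (real (r (n + i)) / real (r n)))" for n
    by (simp add: seq_op_def sum_divide_distrib)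
  then show ?thesis
    by (simp only:) (intro tendsto_sum tendsto_mult_left LIMSEQ_shift_div assms)
qed

lemma geometric_growth:
  assumes "0 < n" "0 \<le> b" "\<And>k. n \<le> k \<Longrightarrow> b \<le> ratio k"
  shows "b ^ j * real (r n) \<le> real (r (n + j))"
proof (induction j)
  case 0
  then show ?case by simp
next
  case (Suc j)
  have "b * real (r (n + j)) \<le> real (r (Suc (n + j)))"
    using assms(3)[of "n + j"] r_pos[of "n + j"] assms(1) by (simp add: ratio_def field_simps)
  moreover have "b * (b ^ j * real (r n)) \<le> b * real (r (n + j))"
    using Suc assms(2) by (rule mult_left_mono)
  ultimately show ?case by (simp add: mult.assoc)
qed

text \<open>Pick \<open>K\<close> with \<open>c b\<^sup>K > 1\<close>; past the thresholds \<open>N\<close>, shifting by \<open>N + K\<close> gains the factor \<open>b\<^sup>K\<close>.\<close>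
lemma shift_exceeds_if_dominated:
  fixes L :: "nat \<Rightarrow> int"
  assumes "1 < b" "\<forall>\<^sub>F n in sequentially. b \<le> ratio n"
    and "0 < c" "\<forall>\<^sub>F n in sequentially. c * real (r n) \<le> of_int (L n)"
  shows "\<exists>\<Delta>. \<forall>n. int (r n) < L (n + \<Delta>)"
proof -
  obtain N0 where N0: "\<And>n. N0 \<le> n \<Longrightarrow> b \<le> ratio n \<and> c * real (r n) \<le> of_int (L n)"
    using eventually_conj[OF assms(2) assms(4)] unfolding eventually_sequentially by blast
  define N where "N = Suc N0"
  have N: "0 < N" "\<And>n. N \<le> n \<Longrightarrow> b \<le> ratio n \<and> c * real (r n) \<le> of_int (L n)"
    using N0 by (simp_all add: N_def)
  obtain K where K: "1 / c < b ^ K" using real_arch_pow[OF assms(1)] by blast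
  have "int (r n) < L (n + (N + K))" for n
  proof -
    define n' where "n' = max n N"
    have "real (r n) \<le> real (r n')" using r_mono by (simp add: n'_def)
    also have "\<dots> < c * b ^ K * real (r n')"
      using K assms(3) r_pos[of n'] N(1) by (simp add: n'_def field_simps)
    also have "\<dots> \<le> c * real (r (n' + K))"
      using geometric_growth[of n' b K] N assms(1,3) by (simp add: n'_def)
    also have "\<dots> \<le> c * real (r (n + (N + K)))"
      using assms(3) r_mono[of "n' + K" "n + (N + K)"] by (simp add: n'_def)
    also have "\<dots> \<le> of_int (L (n + (N + K)))" using N by simp
    finally show ?thesis by simp
  qed
  then show ?thesis by blast
qed

lemma not_shift_exceeds_if_small:
  fixes L :: "nat \<Rightarrow> int"
  assumes lim: "ratio \<longlonglongrightarrow> \<theta>" "0 < \<theta>"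
    and small: "(\<lambda>n. of_int (L n) / real (r n)) \<longlonglongrightarrow> 0"
  shows "\<not> (\<forall>n. int (r n) < L (n + \<Delta>))"
proof
  assume exceeds: "\<forall>n. int (r n) < L (n + \<Delta>)"
  have "\<forall>\<^sub>F n in sequentially.
      inverse (real (r (n + \<Delta>)) / real (r n)) \<le> of_int (L (n + \<Delta>)) / real (r (n + \<Delta>))"
    using eventually_r_pos
  proof (rule eventually_mono)
    fix n assume "0 < r n"
    then have "0 < real (r (n + \<Delta>))" using r_mono[of n "n + \<Delta>"] by simp
    moreover have "real (r n) \<le> of_int (L (n + \<Delta>))" using exceeds[rule_format, of n] by simp
    ultimately show "inverse (real (r (n + \<Delta>)) / real (r n)) \<le> of_int (L (n + \<Delta>)) / real (r (n + \<Delta>))"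
      by (simp add: divide_right_mono)
  qed
  moreover have "(\<lambda>n. inverse (real (r (n + \<Delta>)) / real (r n))) \<longlonglongrightarrow> inverse (\<theta> ^ \<Delta>)"
    using lim by (intro tendsto_inverse LIMSEQ_shift_div) simp_all
  ultimately have "inverse (\<theta> ^ \<Delta>) \<le> 0"
    using LIMSEQ_ignore_initial_segment[OF small] by (intro tendsto_le[OF trivial_limit_sequentially]) simp_all
  with zero_less_power[OF lim(2), of \<Delta>] show False by simp
qed


lemma sparse_seqI:
  assumes "1 < b" "\<forall>\<^sub>F n in sequentially. b \<le> ratio n"
    and trichotomy: "\<And>m a. (\<forall>n. seq_op r m a n = 0) \<or>
        (\<exists>c>0. \<forall>\<^sub>F n in sequentially. c * real (r n) \<le> of_int (seq_op r m a n)) \<or>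
        (\<forall>\<^sub>F n in sequentially. seq_op r m a n < 0)"
  shows "sparse_seq r"
  unfolding sparse_seq_def
proof (intro allI conjI impI)
  fix m a
  let ?L = "seq_op r m a"
  have pos_if_dominated: "\<forall>\<^sub>F n in sequentially. 0 < ?L n"
    if "0 < c" "\<forall>\<^sub>F n in sequentially. c * real (r n) \<le> of_int (?L n)" for c
    using that(2) eventually_r_pos
  proof eventually_elim
    case (elim n)
    have "0 < c * real (r n)" using that(1) elim(2) by simp
    then have "0 < real_of_int (?L n)" using elim(1) by linarith
    then show ?case by simp
  qed
  then show "(\<forall>n. ?L n = 0) \<or> (\<forall>\<^sub>F n in sequentially. 0 < ?L n) \<or> (\<forall>\<^sub>F n in sequentially. ?L n < 0)"
    using trichotomy[of m a] by blast
  assume pos: "\<forall>\<^sub>F n in sequentially. 0 < ?L n"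
  have "\<not> (\<forall>n. ?L n = 0)"
  proof
    assume "\<forall>n. ?L n = 0"
    with pos have "\<forall>\<^sub>F n in sequentially. False" by simp
    then show False by simp
  qed
  moreover have "\<not> (\<forall>\<^sub>F n in sequentially. ?L n < 0)"
  proof
    assume "\<forall>\<^sub>F n in sequentially. ?L n < 0"
    with pos have "\<forall>\<^sub>F n in sequentially. False" by eventually_elim simp
    then show False by simp
  qed
  ultimately obtain c where "0 < c" "\<forall>\<^sub>F n in sequentially. c * real (r n) \<le> of_int (?L n)"
    using trichotomy[of m a] by blast
  then show "\<exists>\<Delta>. \<forall>n. int (r n) < ?L (n + \<Delta>)"
    using shift_exceeds_if_dominated assms(1,2) by blast
qed

lemma dominated_or_negative_if_tendsto:
  fixes L :: "nat \<Rightarrow> int"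
  assumes lim: "(\<lambda>n. of_int (L n) / real (r (n + k))) \<longlonglongrightarrow> c" and "c \<noteq> 0"
  shows "(\<exists>c>0. \<forall>\<^sub>F n in sequentially. c * real (r n) \<le> of_int (L n)) \<or>
    (\<forall>\<^sub>F n in sequentially. L n < 0)"
proof (cases "0 < c")
  case True
  have half: "c / 2 < c" using True by simp
  have "\<forall>\<^sub>F n in sequentially. c / 2 * real (r n) \<le> of_int (L n)"
    using order_tendstoD(1)[OF lim half] eventually_r_pos
  proof eventually_elim
    case (elim n)
    have "0 < real (r (n + k))" using r_mono[of n "n + k"] elim(2) by simp
    then have "c / 2 * real (r (n + k)) < of_int (L n)" using elim(1) by (simp add: pos_less_divide_eq)
    moreover have "c / 2 * real (r n) \<le> c / 2 * real (r (n + k))" using True r_mono[of n "n + k"] by simp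
    ultimately show ?case by linarith
  qed
  then show ?thesis using True by (intro disjI1 exI[of _ "c / 2"]) simp
next
  case False
  with \<open>c \<noteq> 0\<close> have "c < 0" by simp
  have "\<forall>\<^sub>F n in sequentially. L n < 0"
    using order_tendstoD(2)[OF lim \<open>c < 0\<close>] eventually_r_pos
  proof eventually_elim
    case (elim n)
    have "0 < real (r (n + k))" using r_mono[of n "n + k"] elim(2) by simp
    then show ?case using elim(1) by (simp add: divide_less_0_iff)
  qed
  then show ?thesis ..
qed

lemma LIMSEQ_seq_op_div_top:
  assumes lim: "filterlim ratio at_top sequentially"
  shows "(\<lambda>n. of_int (seq_op r k a n) / real (r (n + k))) \<longlonglongrightarrow> of_int (a k)"
proof -
  have lower: "(\<lambda>n. real (r (n + i)) / real (r (n + k))) \<longlonglongrightarrow> 0" if "i < k" for i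
  proof (rule tendsto_sandwich[of "\<lambda>_. 0" _ _ "\<lambda>n. inverse (ratio (n + (k - 1)))"])
    show "\<forall>\<^sub>F n in sequentially. 0 \<le> real (r (n + i)) / real (r (n + k))" by simp
    show "\<forall>\<^sub>F n in sequentially. real (r (n + i)) / real (r (n + k)) \<le> inverse (ratio (n + (k - 1)))"
    proof (rule always_eventually, rule allI)
      fix n
      have "Suc (n + (k - 1)) = n + k" using that by simp
      moreover have "r (n + i) \<le> r (n + (k - 1))" using that by (intro r_mono) simp
      ultimately show "real (r (n + i)) / real (r (n + k)) \<le> inverse (ratio (n + (k - 1)))"
        by (simp add: ratio_def divide_right_mono)
    qed
    show "(\<lambda>n. inverse (ratio (n + (k - 1)))) \<longlonglongrightarrow> 0"
      using LIMSEQ_ignore_initial_segment[OF tendsto_inverse_0_at_top[OF lim]] .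
  qed simp
  have "\<forall>\<^sub>F n in sequentially. real (r (n + k)) / real (r (n + k)) = 1"
    using eventually_gt_at_top[of 0] by (rule eventually_mono) (simp add: r_pos)
  then have top: "(\<lambda>n. real (r (n + k)) / real (r (n + k))) \<longlonglongrightarrow> 1"
    by (rule tendsto_eventually)
  have "of_int (seq_op r k a n) / real (r (n + k)) =
      (\<Sum>i<k. of_int (a i) * (real (r (n + i)) / real (r (n + k)))) +
      of_int (a k) * (real (r (n + k)) / real (r (n + k)))" for n
    by (simp add: seq_op_def sum_divide_distrib add_divide_distrib flip: lessThan_Suc_atMost)
  moreover have "(\<lambda>n. (\<Sum>i<k. of_int (a i) * (real (r (n + i)) / real (r (n + k)))) +
      of_int (a k) * (real (r (n + k)) / real (r (n + k)))) \<longlonglongrightarrow> (\<Sum>i<k. of_int (a i) * 0) + of_int (a k) * 1"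
    by (intro tendsto_add tendsto_sum tendsto_mult_left lower top) simp
  ultimately show ?thesis by simp
qed

lemma sparse_seq_if_LIMSEQ_ratio:
  assumes "1 < \<theta>" "ratio \<longlonglongrightarrow> \<theta>"
    and rec: "algebraic \<theta> \<longrightarrow> (\<forall>f. is_min_poly \<theta> f \<longrightarrow> (\<forall>n. poly_seq_op f r n = 0))"
  shows "sparse_seq r"
proof (rule sparse_seqI)
  show "1 < (1 + \<theta>) / 2" using assms(1) by simp
  show "\<forall>\<^sub>F n in sequentially. (1 + \<theta>) / 2 \<le> ratio n"
    using order_tendstoD(1)[OF assms(2), of "(1 + \<theta>) / 2"] assms(1) by (auto elim: eventually_mono)
  fix m a
  define P where "P = (\<Sum>i\<le>m. of_int (a i) * \<theta> ^ i)"
  have lim: "(\<lambda>n. of_int (seq_op r m a n) / real (r (n + 0))) \<longlonglongrightarrow> P"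
    using LIMSEQ_seq_op_div[OF assms(2)] by (simp add: P_def)
  show "(\<forall>n. seq_op r m a n = 0) \<or>
      (\<exists>c>0. \<forall>\<^sub>F n in sequentially. c * real (r n) \<le> of_int (seq_op r m a n)) \<or>
      (\<forall>\<^sub>F n in sequentially. seq_op r m a n < 0)"
  proof (cases "P = 0")
    case True
    then show ?thesis using seq_op_eq_0_if_root[OF rec] by (simp add: P_def)
  next
    case False
    then show ?thesis using dominated_or_negative_if_tendsto[OF lim False] by blast
  qed
qed

lemma sparse_seq_if_filterlim_ratio:
  assumes lim: "filterlim ratio at_top sequentially"
  shows "sparse_seq r"
proof (rule sparse_seqI)
  show "1 < (2::real)" by simp
  show "\<forall>\<^sub>F n in sequentially. 2 \<le> ratio n" using lim by (simp add: filterlim_at_top)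
  fix m a
  show "(\<forall>n. seq_op r m a n = 0) \<or>
      (\<exists>c>0. \<forall>\<^sub>F n in sequentially. c * real (r n) \<le> of_int (seq_op r m a n)) \<or>
      (\<forall>\<^sub>F n in sequentially. seq_op r m a n < 0)"
  proof (cases "\<forall>i\<le>m. a i = 0")
    case True
    then show ?thesis by (simp add: seq_op_def)
  next
    case False
    then obtain k where k: "k \<le> m" "a k \<noteq> 0" "\<And>i. i \<le> m \<Longrightarrow> a i \<noteq> 0 \<Longrightarrow> i \<le> k"
      using Nat.ex_has_greatest_nat[of "\<lambda>i. i \<le> m \<and> a i \<noteq> 0" _ m] by blast
    have "seq_op r m a n = seq_op r k a n" for n
      unfolding seq_op_def
    proof (rule sum.mono_neutral_right)
      show "\<forall>i\<in>{..m} - {..k}. a i * int (r (n + i)) = 0"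
        using k(3) by (metis Diff_iff atMost_iff mult_eq_0_iff)
    qed (use k(1) in auto)
    then show ?thesis
      using dominated_or_negative_if_tendsto[OF LIMSEQ_seq_op_div_top[OF lim]] k(2) by simp
  qed
qed

lemma regular_seq_imp_sparse_seq:
  assumes "regular_seq r"
  shows "sparse_seq r"
  using assms unfolding regular_seq_def ratio_eq
proof (elim disjE exE conjE)
  show "filterlim ratio at_top sequentially \<Longrightarrow> sparse_seq r"
    by (rule sparse_seq_if_filterlim_ratio)
qed (rule sparse_seq_if_LIMSEQ_ratio)


lemma eventually_ratio_side_of_rat:
  assumes sparse: "sparse_seq r" and "q \<in> \<rat>"
  shows "(\<forall>\<^sub>F n in sequentially. q \<le> ratio n) \<or> (\<forall>\<^sub>F n in sequentially. ratio n \<le> q)"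
proof -
  obtain a b where b: "0 < b" and q: "q = of_int a / of_int b" using \<open>q \<in> \<rat>\<close> by (rule Rats_cases')
  define c :: "nat \<Rightarrow> int" where "c i = (if i = 0 then - a else b)" for i
  have L: "seq_op r 1 c n = b * int (r (Suc n)) - a * int (r n)" for n
    by (simp add: seq_op_def c_def)
  have sides: "(q \<le> ratio n \<longleftrightarrow> 0 \<le> seq_op r 1 c n) \<and> (ratio n \<le> q \<longleftrightarrow> seq_op r 1 c n \<le> 0)"
    if "0 < n" for n
  proof -
    have "0 < real (r n)" using r_pos[OF that] by simp
    then have "(q \<le> ratio n \<longleftrightarrow> of_int a * real (r n) \<le> of_int b * real (r (Suc n))) \<and>
        (ratio n \<le> q \<longleftrightarrow> of_int b * real (r (Suc n)) \<le> of_int a * real (r n))"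
      using b by (simp add: q ratio_def field_simps)
    moreover have "real_of_int (seq_op r 1 c n) = of_int b * real (r (Suc n)) - of_int a * real (r n)"
      unfolding L by simp
    ultimately show ?thesis
      unfolding of_int_0_le_iff[where 'a = real, symmetric] of_int_le_0_iff[where 'a = real, symmetric]
      by simp
  qed
  have "(\<forall>n. seq_op r 1 c n = 0) \<or> (\<forall>\<^sub>F n in sequentially. 0 < seq_op r 1 c n) \<or>
      (\<forall>\<^sub>F n in sequentially. seq_op r 1 c n < 0)"
    using sparse unfolding sparse_seq_def by blast
  then have "(\<forall>\<^sub>F n in sequentially. 0 \<le> seq_op r 1 c n) \<or> (\<forall>\<^sub>F n in sequentially. seq_op r 1 c n \<le> 0)"
  proof (elim disjE)
    assume "\<forall>\<^sub>F n in sequentially. 0 < seq_op r 1 c n"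
    then show ?thesis by (auto elim: eventually_mono)
  next
    assume "\<forall>\<^sub>F n in sequentially. seq_op r 1 c n < 0"
    then have "\<forall>\<^sub>F n in sequentially. seq_op r 1 c n \<le> 0" by (auto elim: eventually_mono)
    then show ?thesis ..
  qed simp
  then show ?thesis
  proof
    assume "\<forall>\<^sub>F n in sequentially. 0 \<le> seq_op r 1 c n"
    with eventually_gt_at_top[of 0] have "\<forall>\<^sub>F n in sequentially. q \<le> ratio n"
      by eventually_elim (simp add: sides)
    then show ?thesis ..
  next
    assume "\<forall>\<^sub>F n in sequentially. seq_op r 1 c n \<le> 0"
    with eventually_gt_at_top[of 0] have "\<forall>\<^sub>F n in sequentially. ratio n \<le> q"
      by eventually_elim (simp add: sides)
    then show ?thesis ..
  qed
qed

lemma ratio_converges_if_sparse_seq: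
  assumes "sparse_seq r"
  shows "filterlim ratio at_top sequentially \<or> (\<exists>\<theta>. ratio \<longlonglongrightarrow> \<theta>)"
  by (rule tendsto_or_filterlim_at_top_if_rational_sides[OF _ eventually_one_le_ratio])
    (simp_all add: eventually_ratio_side_of_rat[OF assms])

text \<open>By (S2) an eventually positive \<open>L\<close> would satisfy \<open>L (n + \<Delta>) > r n\<close>, impossible for
  \<open>L = o(r)\<close>; the same applies to \<open>-L\<close>.\<close>
lemma seq_op_eq_0_if_small:
  assumes sparse: "sparse_seq r" and lim: "ratio \<longlonglongrightarrow> \<theta>" "0 < \<theta>"
    and small: "(\<lambda>n. of_int (seq_op r m a n) / real (r n)) \<longlonglongrightarrow> 0"
  shows "seq_op r m a n = 0"
proof -
  have not_pos: "\<not> (\<forall>\<^sub>F n in sequentially. 0 < seq_op r m b n)"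
    if "(\<lambda>n. of_int (seq_op r m b n) / real (r n)) \<longlonglongrightarrow> 0" for b
    using sparse not_shift_exceeds_if_small[OF lim that] unfolding sparse_seq_def by blast
  have neg: "seq_op r m (\<lambda>i. - a i) n = - seq_op r m a n" for n
    by (simp add: seq_op_def sum_negf)
  have "\<not> (\<forall>\<^sub>F n in sequentially. seq_op r m a n < 0)"
    using not_pos[of "\<lambda>i. - a i"] tendsto_minus[OF small] by (simp add: neg)
  then show ?thesis
    using not_pos[OF small] sparse unfolding sparse_seq_def by blast
qed

lemma sparse_seq_imp_regular_seq:
  assumes sparse: "sparse_seq r"
  shows "regular_seq r"
proof (cases "filterlim ratio at_top sequentially")
  case True
  then show ?thesis by (simp add: regular_seq_def ratio_eq)
next
  case False
  then obtain \<theta> where lim: "ratio \<longlonglongrightarrow> \<theta>" using ratio_converges_if_sparse_seq[OF sparse] by blast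
  have "1 \<le> \<theta>" using tendsto_lowerbound[OF lim eventually_one_le_ratio] by simp
  have "1 < \<theta>"
  proof (rule ccontr)
    assume "\<not> 1 < \<theta>"
    with \<open>1 \<le> \<theta>\<close> have "\<theta> = 1" by simp
    define c :: "nat \<Rightarrow> int" where "c i = (if i = 0 then - 1 else 1)" for i
    have "(\<lambda>n. of_int (seq_op r 1 c n) / real (r n)) \<longlonglongrightarrow> 0"
      using LIMSEQ_seq_op_div[OF lim, of 1 c] \<open>\<theta> = 1\<close> by (simp add: c_def)
    then have "seq_op r 1 c 0 = 0" using seq_op_eq_0_if_small[OF sparse lim] \<open>\<theta> = 1\<close> by simp
    then show False using strict_monoD[OF strict_mono, of 0 1] by (simp add: seq_op_def c_def)
  qed
  moreover have "poly_seq_op f r n = 0" if f: "is_min_poly \<theta> f" for f n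
  proof -
    obtain d a where d: "0 < d" and a: "\<And>i. rat_of_int (a i) = of_int d * coeff f i"
      using rat_poly_integer_multiple[of f] by blast
    have a_real: "real_of_int (a i) = of_int d * of_rat (coeff f i)" for i
      using arg_cong[OF a[of i], of "of_rat :: rat \<Rightarrow> real"] by (simp add: of_rat_mult)
    have "(\<Sum>i\<le>degree f. of_int (a i) * \<theta> ^ i) = of_int d * poly (map_poly of_rat f) \<theta>"
      by (simp add: poly_map_poly_of_rat_eq_sum[of f "degree f"] a_real sum_distrib_left mult.assoc)
    also have "\<dots> = 0" using f by (simp add: is_min_poly_def)
    finally have "seq_op r (degree f) a n = 0"
      using LIMSEQ_seq_op_div[OF lim, of "degree f" a] \<open>1 < \<theta>\<close>
      by (intro seq_op_eq_0_if_small[OF sparse lim]) simp_all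
    moreover have "rat_of_int (seq_op r (degree f) a n) = of_int d * poly_seq_op f r n"
      by (simp add: seq_op_def poly_seq_op_def a sum_distrib_left mult.assoc)
    ultimately show ?thesis using d by simp
  qed
  ultimately show ?thesis using lim by (auto simp: regular_seq_def ratio_eq)
qed

end

theorem mainTheorem8:
  fixes R :: "nat set"
  assumes "infinite R"
  shows "sparse R \<longleftrightarrow> regular R"
proof -
  interpret increasing_seq "enumerate R"
    using strict_mono_enumerate[OF assms] by unfold_locales
  show ?thesis
    unfolding sparse_iff_sparse_seq[OF assms] regular_iff_regular_seq
    using sparse_seq_imp_regular_seq regular_seq_imp_sparse_seq by blast
qed

end
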